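(* Let the data be generated by the linear-Gaussian model in the context, and consider a linear CEVAE with one-dimensional latent space ($d=1$) trained with the proxy reconstruction term removed, i.e. with the population objective $\mathcal L_0(\theta,\phi)=\mathbb E_{(x,t,y)\sim p}\Big[\mathbb E_{q_\phi(z\mid x,t,y)}[\log p_\theta(t\mid z)+\log p_\theta(y\mid z,t)]-\mathrm{KL}[q_\phi(z\mid x,t,y)\,\|\,p(z)]\Big]$. Then: (a) there exist global maximizers $(\theta,\phi)$ of $\mathcal L_0$ with $\gamma_{yz}=0$, and there exist global maximizers of $\mathcal L_0$ with $\gamma_t=0$; and (b) every global maximizer of $\mathcal L_0$ with $\gamma_{yz}=0$ or with $\gamma_t=0$ satisfies $p_\theta(y\mid do(t))=p(y\mid t)$ for all $t\in\mathbb R$, where $p(y\mid t)$ is the observational conditional distribution of $y$ given $t$ under the data distribution.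
   Context: Linear-Gaussian data generating model: $z\sim\mathcal N(0,1)$ is an unobserved confounder; given $z$, the observed variables are independent draws $x_1\mid z\sim\mathcal N(c_1 z,\sigma_1^2)$, $x_2\mid z\sim\mathcal N(c_2 z,\sigma_2^2)$, $t\mid z\sim\mathcal N(c_t z,\sigma_t^2)$, and $y\mid z,t\sim\mathcal N(c_{yz}z+c_{yt}t,\sigma_y^2)$, where $c_\cdot\in\mathbb R$ and $\sigma_\cdot>0$ are fixed parameters. Only $(x,t,y)$ with $x=(x_1,x_2)$ is observed, with joint law $p(x,t,y)$. CEVAE causal effect estimate: $p_\theta(y\mid do(t))=\int p_\theta(y\mid z,t)\,p(z)\,dz$ with prior $p(z)=\mathcal N(0,I_d)$. Linear CEVAE (here $d=1$): decoder conditionals $p_\theta(t\mid z)=\mathcal N(\gamma_t z,s_t^2)$ and $p_\theta(y\mid z,t)=\mathcal N(\gamma_{yz} z+\gamma_{yt}t,s_y^2)$ with scalar parameters $\gamma_t,\gamma_{yz},\gamma_{yt}\in\mathbb R$, $s_t,s_y>0$; encoder $q_\phi(z\mid x,t,y)=\mathcal N(a^\top(x_1,x_2,t,y)^\top,\,s_q^2)$ with $a\in\mathbb R^4$ and a single data-independent variance $s_q^2>0$. *)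

theory Defs
  imports "HOL-Probability.Probability"
begin

text \<open>Gaussian densities: normal_density mu sigma x is the density of N(mu, sigma^2) at x
  (sigma is the standard deviation).\<close>

record dgp =
  c_1  :: real
  c_2  :: real
  c_t  :: real
  c_yz :: real
  c_yt :: real
  sig_1 :: real
  sig_2 :: real
  sig_t :: real
  sig_y :: real

definition valid_dgp :: "dgp \<Rightarrow> bool" where
  "valid_dgp D \<longleftrightarrow> sig_1 D > 0 \<and> sig_2 D > 0 \<and> sig_t D > 0 \<and> sig_y D > 0"

definition p_obs :: "dgp \<Rightarrow> real \<Rightarrow> real \<Rightarrow> real \<Rightarrow> real \<Rightarrow> real" where
  "p_obs D x1 x2 t y = (LINT z|lborel.
      std_normal_density z * normal_density (c_1 D * z) (sig_1 D) x1
      * normal_density (c_2 D * z) (sig_2 D) x2 * normal_density (c_t D * z) (sig_t D) t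
      * normal_density (c_yz D * z + c_yt D * t) (sig_y D) y)"

definition p_ty :: "dgp \<Rightarrow> real \<Rightarrow> real \<Rightarrow> real" where
  "p_ty D t y = (LINT x1|lborel. LINT x2|lborel. p_obs D x1 x2 t y)"

definition p_t :: "dgp \<Rightarrow> real \<Rightarrow> real" where
  "p_t D t = (LINT y|lborel. p_ty D t y)"

definition p_cond :: "dgp \<Rightarrow> real \<Rightarrow> real \<Rightarrow> real" where
  "p_cond D t y = p_ty D t y / p_t D t"

record cevae =
  g_t  :: real
  g_yz :: real
  g_yt :: real
  s_t  :: real
  s_y  :: real
  a_1  :: real
  a_2  :: real
  a_t  :: real
  a_y  :: real
  s_q  :: real

definition valid_cevae :: "cevae \<Rightarrow> bool" where
  "valid_cevae P \<longleftrightarrow> s_t P > 0 \<and> s_y P > 0 \<and> s_q P > 0"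

definition dec_t :: "cevae \<Rightarrow> real \<Rightarrow> real \<Rightarrow> real" where
  "dec_t P z t = normal_density (g_t P * z) (s_t P) t"

definition dec_y :: "cevae \<Rightarrow> real \<Rightarrow> real \<Rightarrow> real \<Rightarrow> real" where
  "dec_y P z t y = normal_density (g_yz P * z + g_yt P * t) (s_y P) y"

definition enc :: "cevae \<Rightarrow> real \<Rightarrow> real \<Rightarrow> real \<Rightarrow> real \<Rightarrow> real \<Rightarrow> real" where
  "enc P x1 x2 t y z =
     normal_density (a_1 P * x1 + a_2 P * x2 + a_t P * t + a_y P * y) (s_q P) z"

definition KL_enc :: "cevae \<Rightarrow> real \<Rightarrow> real \<Rightarrow> real \<Rightarrow> real \<Rightarrow> real" where
  "KL_enc P x1 x2 t y =
     (LINT z|lborel. enc P x1 x2 t y z * ln (enc P x1 x2 t y z / std_normal_density z))"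

definition elbo0 :: "cevae \<Rightarrow> real \<Rightarrow> real \<Rightarrow> real \<Rightarrow> real \<Rightarrow> real" where
  "elbo0 P x1 x2 t y =
     (LINT z|lborel. enc P x1 x2 t y z * (ln (dec_t P z t) + ln (dec_y P z t y)))
     - KL_enc P x1 x2 t y"

definition L0 :: "dgp \<Rightarrow> cevae \<Rightarrow> real" where
  "L0 D P = (LINT x1|lborel. LINT x2|lborel. LINT t|lborel. LINT y|lborel.
               p_obs D x1 x2 t y * elbo0 P x1 x2 t y)"

definition is_global_max :: "dgp \<Rightarrow> cevae \<Rightarrow> bool" where
  "is_global_max D P \<longleftrightarrow> valid_cevae P \<and> (\<forall>P'. valid_cevae P' \<longrightarrow> L0 D P' \<le> L0 D P)"

definition p_do :: "cevae \<Rightarrow> real \<Rightarrow> real \<Rightarrow> real" where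
  "p_do P t y = (LINT z|lborel. dec_y P z t y * std_normal_density z)"

end

theory Submission
  imports Defs
begin

text \<open>Integrating the Gaussian encoder out, the objective at a data point becomes
  ln p_theta(t, y) - KL(q(z|x,t,y) || p_theta(z|t,y)), where p_theta(t, y) is the bivariate
  Gaussian marginal of the decoder. Hence L_0 <= E_p ln p_theta(t, y) <= E_p ln p(t, y), the second
  step being Gibbs' inequality for the Gaussian law of (t, y) under the data. A decoder with
  gamma_t = gamma_yz = 0 fitting p(t) and p(y|t) directly, with the prior as encoder, attains both
  bounds; this gives (a). Conversely a global maximiser must reproduce p(t, y), i.e. the variance
  of t, the regression slope of y on t and the residual variance, and if gamma_yz = 0 or
  gamma_t = 0 its interventional law N(gamma_yt t, gamma_yz^2 + s_y^2) is its own conditional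
  p_theta(y|t) = p(y|t).\<close>

subsection \<open>Gaussian integrals\<close>

lemma normal_density_second_moment:
  assumes "0 < \<sigma>"
  shows "integrable lborel (\<lambda>u. normal_density \<mu> \<sigma> u * u^2)"
    and "(\<integral>u. normal_density \<mu> \<sigma> u * u^2 \<partial>lborel) = \<mu>^2 + \<sigma>^2"
proof -
  have eq: "\<And>u. normal_density \<mu> \<sigma> u * u^2 = normal_density \<mu> \<sigma> u * (u - \<mu>)^2
      + 2 * \<mu> * (normal_density \<mu> \<sigma> u * u) - \<mu>^2 * normal_density \<mu> \<sigma> u"
    by (simp add: power2_eq_square algebra_simps)
  note int = integrable_normal_moment[OF assms, of \<mu> 2] integrable_normal_moment_nz_1[OF assms]
    integrable_normal_density[OF assms]
  have var: "(\<integral>u. normal_density \<mu> \<sigma> u * (u - \<mu>)^2 \<partial>lborel) = \<sigma>^2"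
    using integral_normal_moment_even[OF assms, of \<mu> 1] assms by (simp add: power2_eq_square)
  show "integrable lborel (\<lambda>u. normal_density \<mu> \<sigma> u * u^2)"
    unfolding eq using int by simp
  show "(\<integral>u. normal_density \<mu> \<sigma> u * u^2 \<partial>lborel) = \<mu>^2 + \<sigma>^2"
    unfolding eq using int var integral_normal_moment_nz_1[OF assms] integral_normal_density[OF assms]
    by (simp add: power2_eq_square)
qed

lemma normal_density_times_quadratic:
  assumes "0 < \<sigma>" and f_eq: "\<And>u. f u = A + B * u + C * u^2"
  shows "integrable lborel (\<lambda>u. normal_density \<mu> \<sigma> u * f u)"
    and "(\<integral>u. normal_density \<mu> \<sigma> u * f u \<partial>lborel) = A + B * \<mu> + C * (\<mu>^2 + \<sigma>^2)"
proof -
  have eq: "\<And>u. normal_density \<mu> \<sigma> u * f u = A * normal_density \<mu> \<sigma> u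
      + B * (normal_density \<mu> \<sigma> u * u) + C * (normal_density \<mu> \<sigma> u * u^2)"
    by (simp add: f_eq algebra_simps)
  note int = integrable_normal_density[OF assms(1)] integrable_normal_moment_nz_1[OF assms(1)]
    normal_density_second_moment(1)[OF assms(1)]
  show "integrable lborel (\<lambda>u. normal_density \<mu> \<sigma> u * f u)"
    unfolding eq using int by simp
  show "(\<integral>u. normal_density \<mu> \<sigma> u * f u \<partial>lborel) = A + B * \<mu> + C * (\<mu>^2 + \<sigma>^2)"
    unfolding eq using int normal_density_second_moment(2)[OF assms(1)]
      integral_normal_moment_nz_1[OF assms(1)] integral_normal_density[OF assms(1)]
    by (simp add: power2_eq_square)
qed

lemma nn_integral_normal_density_times_quadratic:
  assumes "0 < \<sigma>" and "0 \<le> K" and f_eq: "\<And>u. f u = A + B * u + C * u^2"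
    and f_nonneg: "\<And>u. 0 \<le> f u"
  shows "(\<integral>\<^sup>+u. ennreal (K * (normal_density \<mu> \<sigma> u * f u)) \<partial>lborel)
    = ennreal (K * (A + B * \<mu> + C * (\<mu>^2 + \<sigma>^2)))"
proof -
  have "(\<integral>\<^sup>+u. ennreal (K * (normal_density \<mu> \<sigma> u * f u)) \<partial>lborel)
      = ennreal (\<integral>u. K * (normal_density \<mu> \<sigma> u * f u) \<partial>lborel)"
    using normal_density_times_quadratic(1)[OF assms(1) f_eq] assms(2) f_nonneg
    by (intro nn_integral_eq_integral) auto
  then show ?thesis
    using normal_density_times_quadratic(2)[OF assms(1) f_eq] by simp
qed

lemma ln_normal_density:
  "0 < \<sigma> \<Longrightarrow> ln (normal_density \<mu> \<sigma> x) = - ln (sqrt (2 * pi * \<sigma>^2)) - (x - \<mu>)^2 / (2 * \<sigma>^2)"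
  unfolding normal_density_def by (simp add: ln_mult ln_div)

lemma ln_sqrt_two_pi: "0 < x \<Longrightarrow> ln (sqrt (2 * pi * x)) = (ln (2 * pi) + ln x) / 2"
  by (simp add: ln_sqrt ln_mult)

text \<open>Conjugacy: a Gaussian prior on z and a linear-Gaussian likelihood for u factor into the
  marginal of u times the posterior of z.\<close>
lemma normal_density_conjugate:
  assumes "0 < r" and "0 < \<sigma>"
  shows "normal_density m r z * normal_density (\<alpha> * z + \<beta>) \<sigma> u =
    normal_density (\<alpha> * m + \<beta>) (sqrt (\<alpha>^2 * r^2 + \<sigma>^2)) u *
    normal_density (m + \<alpha> * r^2 * (u - \<alpha> * m - \<beta>) / (\<alpha>^2 * r^2 + \<sigma>^2))
      (sqrt (r^2 * \<sigma>^2 / (\<alpha>^2 * r^2 + \<sigma>^2))) z"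
proof -
  define S where "S = \<alpha>^2 * r^2 + \<sigma>^2"
  have S: "0 < S" unfolding S_def using assms by (simp add: add_nonneg_pos)
  have const_eq: "sqrt (2 * pi * r^2) * sqrt (2 * pi * \<sigma>^2) = sqrt (2 * pi * S) * sqrt (2 * pi * (r^2 * \<sigma>^2 / S))"
    using S by (simp add: real_sqrt_mult[symmetric] field_simps)
  have exps: "- ((z - m)^2) / (2 * r^2) + - ((u - (\<alpha> * z + \<beta>))^2) / (2 * \<sigma>^2) =
      - ((u - (\<alpha> * m + \<beta>))^2) / (2 * S)
      + - ((z - (m + \<alpha> * r^2 * (u - \<alpha> * m - \<beta>) / S))^2) / (2 * (r^2 * \<sigma>^2 / S))"
    using S assms apply (simp add: field_simps)
    apply (simp only: S_def)
    apply algebra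
    done
  have "normal_density m r z * normal_density (\<alpha> * z + \<beta>) \<sigma> u =
      1 / (sqrt (2 * pi * r^2) * sqrt (2 * pi * \<sigma>^2))
      * exp (- ((z - m)^2) / (2 * r^2) + - ((u - (\<alpha> * z + \<beta>))^2) / (2 * \<sigma>^2))"
    unfolding normal_density_def by (simp add: mult_exp_exp)
  also have "\<dots> = normal_density (\<alpha> * m + \<beta>) (sqrt S) u *
      normal_density (m + \<alpha> * r^2 * (u - \<alpha> * m - \<beta>) / S) (sqrt (r^2 * \<sigma>^2 / S)) z"
    unfolding const_eq exps normal_density_def using S by (simp add: mult_exp_exp)
  finally show ?thesis unfolding S_def .
qed

lemma normal_density_conjugateE:
  assumes "0 < r" and "0 < \<sigma>"
  obtains m' v' where "0 < v'" and "\<And>z. normal_density m r z * normal_density (\<alpha> * z + \<beta>) \<sigma> u =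
    normal_density (\<alpha> * m + \<beta>) (sqrt (\<alpha>^2 * r^2 + \<sigma>^2)) u * normal_density m' v' z"
proof (rule that)
  show "0 < sqrt (r^2 * \<sigma>^2 / (\<alpha>^2 * r^2 + \<sigma>^2))"
    using assms by (simp add: add_nonneg_pos)
qed (rule normal_density_conjugate[OF assms])

lemma integral_normal_density_marginal:
  assumes "0 < r" and "0 < \<sigma>"
  shows "(\<integral>z. normal_density (\<alpha> * z + \<beta>) \<sigma> u * normal_density m r z \<partial>lborel) =
    normal_density (\<alpha> * m + \<beta>) (sqrt (\<alpha>^2 * r^2 + \<sigma>^2)) u"
proof -
  obtain m' v' where v': "0 < v'" and eq: "\<And>z. normal_density m r z * normal_density (\<alpha> * z + \<beta>) \<sigma> u =
      normal_density (\<alpha> * m + \<beta>) (sqrt (\<alpha>^2 * r^2 + \<sigma>^2)) u * normal_density m' v' z"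
    using normal_density_conjugateE[OF assms] by metis
  have "(\<integral>z. normal_density (\<alpha> * z + \<beta>) \<sigma> u * normal_density m r z \<partial>lborel) =
      (\<integral>z. normal_density (\<alpha> * m + \<beta>) (sqrt (\<alpha>^2 * r^2 + \<sigma>^2)) u * normal_density m' v' z \<partial>lborel)"
    by (intro Bochner_Integration.integral_cong refl) (metis eq mult.commute)
  also have "\<dots> = normal_density (\<alpha> * m + \<beta>) (sqrt (\<alpha>^2 * r^2 + \<sigma>^2)) u"
    using v' by simp
  finally show ?thesis .
qed

subsection \<open>Gibbs' inequality for Gaussians\<close>

lemma ln_add_divide_ge:
  fixes a x :: real
  assumes "0 < a" and "0 < x"
  shows "ln a + 1 \<le> ln x + a / x"
proof -
  have "ln (a / x) \<le> a / x - 1" using assms by (intro ln_le_minus_one) simp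
  then show ?thesis using assms by (simp add: ln_div)
qed

lemma ln_add_divide_le_imp_eq:
  fixes a x :: real
  assumes "0 < a" and "0 < x" and "ln x + a / x \<le> ln a + 1"
  shows "x = a"
proof -
  have "ln (a / x) = ln a - ln x" using assms by (simp add: ln_div)
  then have "ln (a / x) = a / x - 1"
    using ln_add_divide_ge[OF assms(1,2)] assms(3) by linarith
  then have "a / x = 1" using assms by (intro ln_eq_minus_one) simp_all
  then show ?thesis using assms(2) by simp
qed

text \<open>Expected log-density of N(0, x) N(beta t, r) under a Gaussian law of (t, y) with
  Var t = S and residual variance R, q being the excess squared regression error.\<close>
lemma gaussian_cross_entropy_le:
  fixes S R x r q :: real
  assumes S: "0 < S" and R: "0 < R" and x: "0 < x" and r: "0 < r" and q: "0 \<le> q"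
  shows "- ln (sqrt (2 * pi * x)) - ln (sqrt (2 * pi * r)) - S / (2 * x) - (R + q) / (2 * r)
      \<le> - ln (sqrt (2 * pi * S)) - ln (sqrt (2 * pi * R)) - 1" (is "?cross \<le> ?ent")
    and "- ln (sqrt (2 * pi * S)) - ln (sqrt (2 * pi * R)) - 1
      \<le> - ln (sqrt (2 * pi * x)) - ln (sqrt (2 * pi * r)) - S / (2 * x) - (R + q) / (2 * r)
      \<Longrightarrow> x = S \<and> r = R \<and> q = 0"
proof -
  define cross ent where "cross = ?cross" and "ent = ?ent"
  have gap: "2 * ent - 2 * cross = (ln x + S / x - (ln S + 1)) + (ln r + R / r - (ln R + 1)) + q / r"
    unfolding cross_def ent_def ln_sqrt_two_pi[OF S] ln_sqrt_two_pi[OF R] ln_sqrt_two_pi[OF x]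
      ln_sqrt_two_pi[OF r]
    using x r by (simp add: field_simps)
  note gibbs = ln_add_divide_ge[OF S x] ln_add_divide_ge[OF R r]
  have qr: "0 \<le> q / r" using q r by simp
  then have "cross \<le> ent" using gap gibbs by linarith
  then show "?cross \<le> ?ent" unfolding cross_def ent_def .
  assume "?ent \<le> ?cross"
  then have "ent \<le> cross" unfolding cross_def ent_def .
  then have "ln x + S / x \<le> ln S + 1" and "ln r + R / r \<le> ln R + 1" and "q / r \<le> 0"
    using gap gibbs qr by linarith+
  then show "x = S \<and> r = R \<and> q = 0"
    using ln_add_divide_le_imp_eq[OF S x] ln_add_divide_le_imp_eq[OF R r] q r
    by (auto simp: divide_le_0_iff)
qed

text \<open>KL(N(m, S) || N(\<mu>, V)); the Gaussians are parametrised by their variances.\<close>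
definition gauss_KL :: "real \<Rightarrow> real \<Rightarrow> real \<Rightarrow> real \<Rightarrow> real" where
  "gauss_KL m S \<mu> V = (ln (V / S) + S / V + (m - \<mu>)^2 / V - 1) / 2"

lemma gauss_KL_nonneg:
  assumes "0 < S" and "0 < V"
  shows "0 \<le> gauss_KL m S \<mu> V"
proof -
  have "0 \<le> (m - \<mu>)^2 / V" using assms by simp
  moreover have "ln (V / S) = ln V - ln S" using assms by (simp add: ln_div)
  ultimately have "0 \<le> ln (V / S) + S / V + (m - \<mu>)^2 / V - 1"
    using ln_add_divide_ge[OF assms] by linarith
  then show ?thesis unfolding gauss_KL_def by simp
qed

subsection \<open>Iterated integrals over the observed variables\<close>

abbreviation "lborel2 \<equiv> (lborel :: real measure) \<Otimes>\<^sub>M (lborel :: real measure)"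
abbreviation "lborel3 \<equiv> (lborel :: real measure) \<Otimes>\<^sub>M lborel2"
abbreviation "lborel4 \<equiv> (lborel :: real measure) \<Otimes>\<^sub>M lborel3"

lemma sigma_finite_lborel2: "sigma_finite_measure lborel2"
  by (intro sigma_finite_pair_measure lborel.sigma_finite_measure_axioms)

lemma sigma_finite_lborel3: "sigma_finite_measure lborel3"
  by (intro sigma_finite_pair_measure lborel.sigma_finite_measure_axioms sigma_finite_lborel2)

lemma sigma_finite_lborel4: "sigma_finite_measure lborel4"
  by (intro sigma_finite_pair_measure lborel.sigma_finite_measure_axioms sigma_finite_lborel3)

interpretation lborel_lborel2: pair_sigma_finite lborel lborel2
  by (intro pair_sigma_finite.intro lborel.sigma_finite_measure_axioms sigma_finite_lborel2)

interpretation lborel_lborel3: pair_sigma_finite lborel lborel3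
  by (intro pair_sigma_finite.intro lborel.sigma_finite_measure_axioms sigma_finite_lborel3)

interpretation lborel4_lborel: pair_sigma_finite lborel4 lborel
  by (intro pair_sigma_finite.intro lborel.sigma_finite_measure_axioms sigma_finite_lborel4)

lemma integral_lborel3_iterated:
  fixes F :: "real \<times> real \<times> real \<Rightarrow> real"
  assumes F: "integrable lborel3 F"
  shows "(\<integral>x. \<integral>y. \<integral>z. F (x, y, z) \<partial>lborel \<partial>lborel \<partial>lborel) = integral\<^sup>L lborel3 F"
proof -
  have [measurable]: "F \<in> borel_measurable lborel3" using F by auto
  have "integral\<^sup>L lborel3 F = (\<integral>x. integral\<^sup>L lborel2 (\<lambda>yz. F (x, yz)) \<partial>lborel)"
    using lborel_lborel2.integral_fst'[OF F] by simp
  also have "\<dots> = (\<integral>x. \<integral>y. \<integral>z. F (x, y, z) \<partial>lborel \<partial>lborel \<partial>lborel)"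
  proof (rule integral_cong_AE)
    show "(\<lambda>x. integral\<^sup>L lborel2 (\<lambda>yz. F (x, yz))) \<in> borel_measurable lborel"
      using lborel_lborel2.integrable_fst'[OF F] by auto
    show "AE x in lborel. integral\<^sup>L lborel2 (\<lambda>yz. F (x, yz)) = (\<integral>y. \<integral>z. F (x, y, z) \<partial>lborel \<partial>lborel)"
      using lborel_lborel2.AE_integrable_fst'[OF F]
      by eventually_elim (subst lborel_pair.integral_fst', auto)
  qed measurable
  finally show ?thesis by simp
qed

lemma integral_lborel4_iterated:
  fixes F :: "real \<times> real \<times> real \<times> real \<Rightarrow> real"
  assumes F: "integrable lborel4 F"
  shows "(\<integral>x. \<integral>y. \<integral>z. \<integral>w. F (x, y, z, w) \<partial>lborel \<partial>lborel \<partial>lborel \<partial>lborel) = integral\<^sup>L lborel4 F"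
proof -
  have [measurable]: "F \<in> borel_measurable lborel4" using F by auto
  have "integral\<^sup>L lborel4 F = (\<integral>x. integral\<^sup>L lborel3 (\<lambda>yzw. F (x, yzw)) \<partial>lborel)"
    using lborel_lborel3.integral_fst'[OF F] by simp
  also have "\<dots> = (\<integral>x. \<integral>y. \<integral>z. \<integral>w. F (x, y, z, w) \<partial>lborel \<partial>lborel \<partial>lborel \<partial>lborel)"
  proof (rule integral_cong_AE)
    show "(\<lambda>x. integral\<^sup>L lborel3 (\<lambda>yzw. F (x, yzw))) \<in> borel_measurable lborel"
      using lborel_lborel3.integrable_fst'[OF F] by auto
    show "AE x in lborel. integral\<^sup>L lborel3 (\<lambda>yzw. F (x, yzw))
        = (\<integral>y. \<integral>z. \<integral>w. F (x, y, z, w) \<partial>lborel \<partial>lborel \<partial>lborel)"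
      using lborel_lborel3.AE_integrable_fst'[OF F]
      by eventually_elim (subst integral_lborel3_iterated, auto)
  qed measurable
  finally show ?thesis by simp
qed

lemma nn_integral_lborel4_iterated:
  fixes F :: "real \<times> real \<times> real \<times> real \<Rightarrow> ennreal"
  assumes [measurable]: "F \<in> borel_measurable lborel4"
  shows "integral\<^sup>N lborel4 F = (\<integral>\<^sup>+x. \<integral>\<^sup>+y. \<integral>\<^sup>+z. \<integral>\<^sup>+w. F (x, y, z, w) \<partial>lborel \<partial>lborel \<partial>lborel \<partial>lborel)"
proof -
  have "integral\<^sup>N lborel4 F = (\<integral>\<^sup>+x. integral\<^sup>N lborel3 (\<lambda>v. F (x, v)) \<partial>lborel)"
    by (rule sigma_finite_measure.nn_integral_fst[OF sigma_finite_lborel3, symmetric]) simp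
  also have "\<dots> = (\<integral>\<^sup>+x. \<integral>\<^sup>+y. integral\<^sup>N lborel2 (\<lambda>v. F (x, y, v)) \<partial>lborel \<partial>lborel)"
    by (intro nn_integral_cong sigma_finite_measure.nn_integral_fst[OF sigma_finite_lborel2, symmetric]) simp
  also have "\<dots> = (\<integral>\<^sup>+x. \<integral>\<^sup>+y. \<integral>\<^sup>+z. \<integral>\<^sup>+w. F (x, y, z, w) \<partial>lborel \<partial>lborel \<partial>lborel \<partial>lborel)"
    by (intro nn_integral_cong lborel.nn_integral_fst[symmetric]) simp
  finally show ?thesis .
qed

subsection \<open>The data distribution\<close>

definition joint_density :: "dgp \<Rightarrow> real \<Rightarrow> real \<Rightarrow> real \<Rightarrow> real \<Rightarrow> real \<Rightarrow> real" where
  "joint_density D z x1 x2 t y = std_normal_density z * normal_density (c_1 D * z) (sig_1 D) x1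
      * normal_density (c_2 D * z) (sig_2 D) x2 * normal_density (c_t D * z) (sig_t D) t
      * normal_density (c_yz D * z + c_yt D * t) (sig_y D) y"

lemma p_obs_eq_integral_joint_density: "p_obs D x1 x2 t y = (\<integral>z. joint_density D z x1 x2 t y \<partial>lborel)"
  unfolding p_obs_def joint_density_def ..

lemma joint_density_nonneg: "0 \<le> joint_density D z x1 x2 t y"
  unfolding joint_density_def by simp

lemma borel_measurable_joint_density [measurable]:
  "(\<lambda>((x1, x2, t, y), z). joint_density D z x1 x2 t y) \<in> borel_measurable (lborel4 \<Otimes>\<^sub>M lborel)"
  unfolding joint_density_def normal_density_def split_beta' by measurable

lemma p_obs_nonneg: "0 \<le> p_obs D x1 x2 t y"
  unfolding p_obs_eq_integral_joint_density by (intro integral_nonneg_AE) (simp add: joint_density_nonneg)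

definition quadratic_weight :: "real \<Rightarrow> real \<Rightarrow> real \<Rightarrow> real \<Rightarrow> real" where
  "quadratic_weight x1 x2 t y = 1 + x1^2 + x2^2 + t^2 + y^2"

lemma one_le_quadratic_weight: "1 \<le> quadratic_weight x1 x2 t y"
  unfolding quadratic_weight_def by (simp add: add_nonneg_nonneg)

lemma nn_integral_joint_density_weight_ty:
  assumes "valid_dgp D"
  shows "(\<integral>\<^sup>+t. \<integral>\<^sup>+y. ennreal (joint_density D z x1 x2 t y * quadratic_weight x1 x2 t y) \<partial>lborel \<partial>lborel) =
    ennreal ((std_normal_density z * normal_density (c_1 D * z) (sig_1 D) x1) * (normal_density (c_2 D * z) (sig_2 D) x2
      * ((1 + x1^2 + (sig_y D^2 + (1 + c_yt D^2) * sig_t D^2 + (c_t D^2 + (c_yz D + c_yt D * c_t D)^2) * z^2)) + x2^2)))"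
proof -
  define C1 C2 Ct Cyz Cyt S1 S2 St Sy where defs: "C1 = c_1 D" "C2 = c_2 D" "Ct = c_t D"
    "Cyz = c_yz D" "Cyt = c_yt D" "S1 = sig_1 D" "S2 = sig_2 D" "St = sig_t D" "Sy = sig_y D"
  have s: "0 < St" "0 < Sy" using assms unfolding valid_dgp_def defs by auto
  define K where "K = std_normal_density z * normal_density (C1 * z) S1 x1 * normal_density (C2 * z) S2 x2"
  have K: "0 \<le> K" unfolding K_def by simp
  have y: "(\<integral>\<^sup>+y. ennreal (joint_density D z x1 x2 t y * quadratic_weight x1 x2 t y) \<partial>lborel) =
      ennreal (K * (normal_density (Ct * z) St t * (1 + x1^2 + x2^2 + t^2 + (Cyz * z + Cyt * t)^2 + Sy^2)))" for t
  proof -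
    have "(\<integral>\<^sup>+y. ennreal (joint_density D z x1 x2 t y * quadratic_weight x1 x2 t y) \<partial>lborel) =
        (\<integral>\<^sup>+y. ennreal ((K * normal_density (Ct * z) St t)
          * (normal_density (Cyz * z + Cyt * t) Sy y * ((1 + x1^2 + x2^2 + t^2) + y^2))) \<partial>lborel)"
      by (intro nn_integral_cong) (simp add: joint_density_def quadratic_weight_def K_def defs algebra_simps)
    also have "\<dots> = ennreal ((K * normal_density (Ct * z) St t) * ((1 + x1^2 + x2^2 + t^2)
        + 0 * (Cyz * z + Cyt * t) + 1 * ((Cyz * z + Cyt * t)^2 + Sy^2)))"
      by (rule nn_integral_normal_density_times_quadratic) (use s K in \<open>auto intro!: add_nonneg_nonneg\<close>)
    finally show ?thesis by (simp add: ac_simps)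
  qed
  have nonneg: "0 \<le> 1 + x1^2 + x2^2 + t^2 + (Cyz * z + Cyt * t)^2 + Sy^2" for t
    by (simp add: add_nonneg_nonneg)
  have "(\<integral>\<^sup>+t. \<integral>\<^sup>+y. ennreal (joint_density D z x1 x2 t y * quadratic_weight x1 x2 t y) \<partial>lborel \<partial>lborel) =
      ennreal (K * ((1 + x1^2 + x2^2 + Cyz^2 * z^2 + Sy^2) + (2 * Cyz * Cyt * z) * (Ct * z)
        + (1 + Cyt^2) * ((Ct * z)^2 + St^2)))"
    unfolding y using s K
    by (intro nn_integral_normal_density_times_quadratic[OF _ _ _ nonneg])
      (simp_all add: power2_eq_square algebra_simps)
  then show ?thesis by (simp add: K_def defs power2_eq_square algebra_simps)
qed

lemma nn_integral_joint_density_weight_given_latent: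
  assumes "valid_dgp D"
  shows "(\<integral>\<^sup>+x1. \<integral>\<^sup>+x2. \<integral>\<^sup>+t. \<integral>\<^sup>+y. ennreal (joint_density D z x1 x2 t y * quadratic_weight x1 x2 t y)
      \<partial>lborel \<partial>lborel \<partial>lborel \<partial>lborel)
    = ennreal (std_normal_density z * (1 + sig_1 D^2 + sig_2 D^2 + (1 + c_yt D^2) * sig_t D^2 + sig_y D^2
        + (c_1 D^2 + c_2 D^2 + c_t D^2 + (c_yz D + c_yt D * c_t D)^2) * z^2))"
proof -
  have s: "0 < sig_1 D" "0 < sig_2 D" using assms unfolding valid_dgp_def by auto
  define R where "R = sig_y D^2 + (1 + c_yt D^2) * sig_t D^2 + (c_t D^2 + (c_yz D + c_yt D * c_t D)^2) * z^2"
  have R: "0 \<le> R" unfolding R_def by (intro add_nonneg_nonneg mult_nonneg_nonneg) auto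
  have x2: "(\<integral>\<^sup>+x2. \<integral>\<^sup>+t. \<integral>\<^sup>+y. ennreal (joint_density D z x1 x2 t y * quadratic_weight x1 x2 t y)
      \<partial>lborel \<partial>lborel \<partial>lborel) =
      ennreal (std_normal_density z * (normal_density (c_1 D * z) (sig_1 D) x1
        * ((1 + R + c_2 D^2 * z^2 + sig_2 D^2) + x1^2)))" for x1
  proof -
    have "(\<integral>\<^sup>+x2. \<integral>\<^sup>+t. \<integral>\<^sup>+y. ennreal (joint_density D z x1 x2 t y * quadratic_weight x1 x2 t y)
        \<partial>lborel \<partial>lborel \<partial>lborel) = ennreal ((std_normal_density z * normal_density (c_1 D * z) (sig_1 D) x1)
        * ((1 + x1^2 + R) + 0 * (c_2 D * z) + 1 * ((c_2 D * z)^2 + sig_2 D^2)))"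
      unfolding nn_integral_joint_density_weight_ty[OF assms] R_def[symmetric] using s R
      by (intro nn_integral_normal_density_times_quadratic) (simp_all add: add_nonneg_nonneg)
    then show ?thesis by (simp add: power2_eq_square algebra_simps)
  qed
  have "(\<integral>\<^sup>+x1. \<integral>\<^sup>+x2. \<integral>\<^sup>+t. \<integral>\<^sup>+y. ennreal (joint_density D z x1 x2 t y * quadratic_weight x1 x2 t y)
      \<partial>lborel \<partial>lborel \<partial>lborel \<partial>lborel) = ennreal (std_normal_density z
        * ((1 + R + c_2 D^2 * z^2 + sig_2 D^2) + 0 * (c_1 D * z) + 1 * ((c_1 D * z)^2 + sig_1 D^2)))"
    unfolding x2 using s R
    by (intro nn_integral_normal_density_times_quadratic) (simp_all add: add_nonneg_nonneg)
  then show ?thesis by (simp add: R_def power2_eq_square algebra_simps)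
qed

lemma integrable_joint_density_weight:
  assumes "valid_dgp D"
  shows "integrable (lborel4 \<Otimes>\<^sub>M lborel)
    (\<lambda>((x1, x2, t, y), z). joint_density D z x1 x2 t y * quadratic_weight x1 x2 t y)"
proof (rule integrableI_nonneg)
  let ?F = "\<lambda>((x1, x2, t, y), z). joint_density D z x1 x2 t y * quadratic_weight x1 x2 t y"
  show F_meas: "?F \<in> borel_measurable (lborel4 \<Otimes>\<^sub>M lborel)"
    unfolding joint_density_def quadratic_weight_def normal_density_def split_beta' by measurable
  show "AE p in lborel4 \<Otimes>\<^sub>M lborel. 0 \<le> ?F p"
    by (intro AE_I2) (auto split: prod.splits
        intro!: mult_nonneg_nonneg joint_density_nonneg order.trans[OF zero_le_one one_le_quadratic_weight])
  define A C where "A = 1 + sig_1 D^2 + sig_2 D^2 + (1 + c_yt D^2) * sig_t D^2 + sig_y D^2"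
    and "C = c_1 D^2 + c_2 D^2 + c_t D^2 + (c_yz D + c_yt D * c_t D)^2"
  have A: "0 \<le> A" and C: "0 \<le> C" unfolding A_def C_def by (simp_all add: add_nonneg_nonneg)
  have "(\<integral>\<^sup>+p. ennreal (?F p) \<partial>(lborel4 \<Otimes>\<^sub>M lborel)) = (\<integral>\<^sup>+z. \<integral>\<^sup>+w. ennreal (?F (w, z)) \<partial>lborel4 \<partial>lborel)"
    by (rule lborel4_lborel.nn_integral_snd[symmetric]) (use F_meas in measurable)
  also have "\<dots> = (\<integral>\<^sup>+z. ennreal (1 * (std_normal_density z * (A + 0 * z + C * z^2))) \<partial>lborel)"
  proof (intro nn_integral_cong)
    fix z
    let ?G = "\<lambda>(x1, x2, t, y). ennreal (joint_density D z x1 x2 t y * quadratic_weight x1 x2 t y)"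
    have "(\<integral>\<^sup>+w. ennreal (?F (w, z)) \<partial>lborel4) = integral\<^sup>N lborel4 ?G"
      by (intro nn_integral_cong) (auto split: prod.splits)
    also have "\<dots> = (\<integral>\<^sup>+x1. \<integral>\<^sup>+x2. \<integral>\<^sup>+t. \<integral>\<^sup>+y. ?G (x1, x2, t, y) \<partial>lborel \<partial>lborel \<partial>lborel \<partial>lborel)"
      by (rule nn_integral_lborel4_iterated)
        (unfold joint_density_def quadratic_weight_def normal_density_def split_beta', measurable)
    finally have "(\<integral>\<^sup>+w. ennreal (?F (w, z)) \<partial>lborel4) = (\<integral>\<^sup>+x1. \<integral>\<^sup>+x2. \<integral>\<^sup>+t. \<integral>\<^sup>+y.
        ennreal (joint_density D z x1 x2 t y * quadratic_weight x1 x2 t y) \<partial>lborel \<partial>lborel \<partial>lborel \<partial>lborel)"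
      by simp
    then show "(\<integral>\<^sup>+w. ennreal (?F (w, z)) \<partial>lborel4) = ennreal (1 * (std_normal_density z * (A + 0 * z + C * z^2)))"
      using nn_integral_joint_density_weight_given_latent[OF assms] by (simp add: A_def C_def)
  qed
  also have "\<dots> = ennreal (1 * (A + 0 * 0 + C * (0^2 + 1^2)))"
    using A C by (intro nn_integral_normal_density_times_quadratic) (simp_all add: add_nonneg_nonneg)
  finally show "(\<integral>\<^sup>+p. ennreal (?F p) \<partial>(lborel4 \<Otimes>\<^sub>M lborel)) < \<infinity>" by simp
qed

lemma integrable_joint_density_mult:
  assumes "valid_dgp D"
    and h_meas: "(\<lambda>(x1, x2, t, y). h x1 x2 t y) \<in> borel_measurable lborel4"
    and h_bound: "\<And>x1 x2 t y. \<bar>h x1 x2 t y\<bar> \<le> K * quadratic_weight x1 x2 t y"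
  shows "integrable (lborel4 \<Otimes>\<^sub>M lborel) (\<lambda>((x1, x2, t, y), z). joint_density D z x1 x2 t y * h x1 x2 t y)"
proof (rule Bochner_Integration.integrable_bound)
  have K: "0 \<le> K" using h_bound[of 0 0 0 0] by (simp add: quadratic_weight_def)
  show "integrable (lborel4 \<Otimes>\<^sub>M lborel)
      (\<lambda>p. K * (\<lambda>((x1, x2, t, y), z). joint_density D z x1 x2 t y * quadratic_weight x1 x2 t y) p)"
    using integrable_joint_density_weight[OF assms(1)] by (rule integrable_mult_right)
  have h_meas': "(\<lambda>p. h (fst (fst p)) (fst (snd (fst p))) (fst (snd (snd (fst p)))) (snd (snd (snd (fst p)))))
      \<in> borel_measurable (lborel4 \<Otimes>\<^sub>M lborel)"
    using measurable_compose[OF measurable_fst h_meas] by (simp add: split_beta')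
  have joint_meas: "(\<lambda>p. joint_density D (snd p) (fst (fst p)) (fst (snd (fst p))) (fst (snd (snd (fst p))))
      (snd (snd (snd (fst p))))) \<in> borel_measurable (lborel4 \<Otimes>\<^sub>M lborel)"
    using borel_measurable_joint_density[of D] by (simp add: split_beta')
  show "(\<lambda>((x1, x2, t, y), z). joint_density D z x1 x2 t y * h x1 x2 t y) \<in> borel_measurable (lborel4 \<Otimes>\<^sub>M lborel)"
    unfolding split_beta' using h_meas' joint_meas by measurable
  show "AE p in lborel4 \<Otimes>\<^sub>M lborel. norm ((\<lambda>((x1, x2, t, y), z). joint_density D z x1 x2 t y * h x1 x2 t y) p)
      \<le> norm (K * (\<lambda>((x1, x2, t, y), z). joint_density D z x1 x2 t y * quadratic_weight x1 x2 t y) p)"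
  proof (intro AE_I2)
    fix p :: "(real \<times> real \<times> real \<times> real) \<times> real"
    obtain x1 x2 t y z where p: "p = ((x1, x2, t, y), z)" by (metis prod.collapse)
    have "\<bar>joint_density D z x1 x2 t y * h x1 x2 t y\<bar> = joint_density D z x1 x2 t y * \<bar>h x1 x2 t y\<bar>"
      by (simp add: abs_mult joint_density_nonneg)
    also have "\<dots> \<le> joint_density D z x1 x2 t y * (K * quadratic_weight x1 x2 t y)"
      by (intro mult_left_mono h_bound joint_density_nonneg)
    also have "\<dots> = \<bar>K * (joint_density D z x1 x2 t y * quadratic_weight x1 x2 t y)\<bar>"
      using K one_le_quadratic_weight[of x1 x2 t y] joint_density_nonneg[of D z x1 x2 t y] by (simp add: abs_mult)
    finally show "norm ((\<lambda>((x1, x2, t, y), z). joint_density D z x1 x2 t y * h x1 x2 t y) p)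
        \<le> norm (K * (\<lambda>((x1, x2, t, y), z). joint_density D z x1 x2 t y * quadratic_weight x1 x2 t y) p)"
      unfolding p by simp
  qed
qed

lemma p_obs_mult_Fubini:
  assumes "valid_dgp D"
    and h_meas: "(\<lambda>(x1, x2, t, y). h x1 x2 t y) \<in> borel_measurable lborel4"
    and h_bound: "\<And>x1 x2 t y. \<bar>h x1 x2 t y\<bar> \<le> K * quadratic_weight x1 x2 t y"
  shows "integrable lborel4 (\<lambda>(x1, x2, t, y). p_obs D x1 x2 t y * h x1 x2 t y)"
    and "integral\<^sup>L lborel4 (\<lambda>(x1, x2, t, y). p_obs D x1 x2 t y * h x1 x2 t y) =
      (\<integral>z. integral\<^sup>L lborel4 (\<lambda>(x1, x2, t, y). joint_density D z x1 x2 t y * h x1 x2 t y) \<partial>lborel)"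
    and "AE z in lborel. integrable lborel4 (\<lambda>(x1, x2, t, y). joint_density D z x1 x2 t y * h x1 x2 t y)"
proof -
  let ?G = "\<lambda>((x1, x2, t, y), z). joint_density D z x1 x2 t y * h x1 x2 t y"
  note G = integrable_joint_density_mult[OF assms]
  have eq: "(\<lambda>(x1, x2, t, y). p_obs D x1 x2 t y * h x1 x2 t y) w = (\<integral>z. ?G (w, z) \<partial>lborel)" for w
    by (auto simp: p_obs_eq_integral_joint_density split: prod.splits)
  show "integrable lborel4 (\<lambda>(x1, x2, t, y). p_obs D x1 x2 t y * h x1 x2 t y)"
    unfolding eq by (rule lborel4_lborel.integrable_fst'[OF G])
  have "integral\<^sup>L lborel4 (\<lambda>(x1, x2, t, y). p_obs D x1 x2 t y * h x1 x2 t y) = integral\<^sup>L (lborel4 \<Otimes>\<^sub>M lborel) ?G"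
    unfolding eq by (rule lborel4_lborel.integral_fst'[OF G])
  also have "\<dots> = (\<integral>z. integral\<^sup>L lborel4 (\<lambda>(x1, x2, t, y). joint_density D z x1 x2 t y * h x1 x2 t y) \<partial>lborel)"
    using lborel4_lborel.integral_snd[of "\<lambda>w z. ?G (w, z)"] G by (simp add: split_beta')
  finally show "integral\<^sup>L lborel4 (\<lambda>(x1, x2, t, y). p_obs D x1 x2 t y * h x1 x2 t y) =
      (\<integral>z. integral\<^sup>L lborel4 (\<lambda>(x1, x2, t, y). joint_density D z x1 x2 t y * h x1 x2 t y) \<partial>lborel)" .
  show "AE z in lborel. integrable lborel4 (\<lambda>(x1, x2, t, y). joint_density D z x1 x2 t y * h x1 x2 t y)"
    using lborel4_lborel.AE_integrable_snd[of "\<lambda>w z. ?G (w, z)"] G by (simp add: split_beta')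
qed

lemma abs_quadratic_ty_le_weight:
  "\<bar>a0 + a1 * t^2 + a2 * (t * y) + a3 * y^2\<bar>
    \<le> (\<bar>a0\<bar> + \<bar>a1\<bar> + \<bar>a2\<bar> + \<bar>a3\<bar>) * quadratic_weight x1 x2 t y"
proof -
  let ?w = "quadratic_weight x1 x2 t y"
  have "0 \<le> (\<bar>t\<bar> - \<bar>y\<bar>)^2" by simp
  then have "2 * \<bar>t * y\<bar> \<le> t^2 + y^2" by (simp add: power2_eq_square algebra_simps abs_mult)
  then have ty: "\<bar>t * y\<bar> \<le> ?w" unfolding quadratic_weight_def
    using zero_le_power2[of t] zero_le_power2[of y] zero_le_power2[of x1] zero_le_power2[of x2] by linarith
  have w: "1 \<le> ?w" "t^2 \<le> ?w" "y^2 \<le> ?w" unfolding quadratic_weight_def by (simp_all add: add_nonneg_nonneg)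
  have "\<bar>a0 + a1 * t^2 + a2 * (t * y) + a3 * y^2\<bar> \<le> \<bar>a0\<bar> + \<bar>a1 * t^2\<bar> + \<bar>a2 * (t * y)\<bar> + \<bar>a3 * y^2\<bar>"
    using abs_triangle_ineq[of "a0 + a1 * t^2 + a2 * (t * y)" "a3 * y^2"]
      abs_triangle_ineq[of "a0 + a1 * t^2" "a2 * (t * y)"] abs_triangle_ineq[of a0 "a1 * t^2"] by linarith
  also have "\<dots> = \<bar>a0\<bar> * 1 + \<bar>a1\<bar> * t^2 + \<bar>a2\<bar> * \<bar>t * y\<bar> + \<bar>a3\<bar> * y^2"
    by (simp add: abs_mult)
  also have "\<dots> \<le> \<bar>a0\<bar> * ?w + \<bar>a1\<bar> * ?w + \<bar>a2\<bar> * ?w + \<bar>a3\<bar> * ?w"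
    using w ty by (intro add_mono mult_left_mono) auto
  finally show ?thesis by (simp add: algebra_simps)
qed

text \<open>E t^2, E t y and E y^2 under the data distribution.\<close>
definition moment_tt :: "dgp \<Rightarrow> real" where
  "moment_tt D = c_t D^2 + sig_t D^2"

definition moment_ty :: "dgp \<Rightarrow> real" where
  "moment_ty D = c_yz D * c_t D + c_yt D * moment_tt D"

definition moment_yy :: "dgp \<Rightarrow> real" where
  "moment_yy D = c_yz D^2 + c_yt D^2 * moment_tt D + 2 * c_yz D * c_yt D * c_t D + sig_y D^2"

definition residual_var_y :: "dgp \<Rightarrow> real" where
  "residual_var_y D = moment_yy D - moment_ty D^2 / moment_tt D"

lemma moment_tt_pos: "valid_dgp D \<Longrightarrow> 0 < moment_tt D"
  unfolding moment_tt_def valid_dgp_def by (simp add: add_nonneg_pos)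

lemma residual_var_y_eq: "valid_dgp D \<Longrightarrow> residual_var_y D = c_yz D^2 * sig_t D^2 / moment_tt D + sig_y D^2"
  using moment_tt_pos[of D] unfolding residual_var_y_def moment_yy_def moment_ty_def
  by (simp add: field_simps) (simp add: moment_tt_def power2_eq_square algebra_simps)

lemma residual_var_y_pos: "valid_dgp D \<Longrightarrow> 0 < residual_var_y D"
  using moment_tt_pos[of D] residual_var_y_eq[of D] unfolding valid_dgp_def
  by (simp add: add_nonneg_pos)

lemma integral_joint_density_quadratic_ty_given_latent:
  assumes "valid_dgp D"
  shows "(\<integral>x1. \<integral>x2. \<integral>t. \<integral>y. joint_density D z x1 x2 t y * (a0 + a1 * t^2 + a2 * (t * y) + a3 * y^2)
      \<partial>lborel \<partial>lborel \<partial>lborel \<partial>lborel)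
    = std_normal_density z * ((a0 + a3 * sig_y D^2 + (a1 + a2 * c_yt D + a3 * c_yt D^2) * sig_t D^2)
      + (a3 * c_yz D^2 + a2 * c_yz D * c_t D + 2 * a3 * c_yz D * c_yt D * c_t D
         + (a1 + a2 * c_yt D + a3 * c_yt D^2) * c_t D^2) * z^2)"
proof -
  define C1 C2 Ct Cyz Cyt S1 S2 St Sy where defs: "C1 = c_1 D" "C2 = c_2 D" "Ct = c_t D"
    "Cyz = c_yz D" "Cyt = c_yt D" "S1 = sig_1 D" "S2 = sig_2 D" "St = sig_t D" "Sy = sig_y D"
  have s: "0 < S1" "0 < S2" "0 < St" "0 < Sy" using assms unfolding valid_dgp_def defs by auto
  define Kt where "Kt = a1 + a2 * Cyt + a3 * Cyt^2"
  define V where "V = a0 + a3 * Sy^2 + Kt * St^2 + (a3 * Cyz^2 + a2 * Cyz * Ct + 2 * a3 * Cyz * Cyt * Ct + Kt * Ct^2) * z^2"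
  have y: "(\<integral>y. joint_density D z x1 x2 t y * (a0 + a1 * t^2 + a2 * (t * y) + a3 * y^2) \<partial>lborel) =
      (std_normal_density z * normal_density (C1 * z) S1 x1 * normal_density (C2 * z) S2 x2) *
      (normal_density (Ct * z) St t * ((a0 + a3 * Cyz^2 * z^2 + a3 * Sy^2) + ((a2 * Cyz + 2 * a3 * Cyz * Cyt) * z) * t + Kt * t^2))"
    for x1 x2 t
  proof -
    have "(\<integral>y. joint_density D z x1 x2 t y * (a0 + a1 * t^2 + a2 * (t * y) + a3 * y^2) \<partial>lborel) =
        (\<integral>y. (std_normal_density z * normal_density (C1 * z) S1 x1 * normal_density (C2 * z) S2 x2
          * normal_density (Ct * z) St t) * (normal_density (Cyz * z + Cyt * t) Sy y * (a0 + a1 * t^2 + a2 * (t * y) + a3 * y^2)) \<partial>lborel)"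
      by (intro Bochner_Integration.integral_cong) (simp_all add: joint_density_def defs algebra_simps)
    also have "\<dots> = (std_normal_density z * normal_density (C1 * z) S1 x1 * normal_density (C2 * z) S2 x2
        * normal_density (Ct * z) St t) * ((a0 + a1 * t^2) + (a2 * t) * (Cyz * z + Cyt * t) + a3 * ((Cyz * z + Cyt * t)^2 + Sy^2))"
      by (subst integral_mult_right_zero, subst normal_density_times_quadratic(2)[OF s(4), where A = "a0 + a1 * t^2"
          and B = "a2 * t" and C = a3]) (auto simp: algebra_simps)
    finally show ?thesis by (simp add: Kt_def power2_eq_square algebra_simps)
  qed
  have t: "(\<integral>t. \<integral>y. joint_density D z x1 x2 t y * (a0 + a1 * t^2 + a2 * (t * y) + a3 * y^2) \<partial>lborel \<partial>lborel) =
      (std_normal_density z * normal_density (C1 * z) S1 x1 * V) * normal_density (C2 * z) S2 x2" for x1 x2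
  proof -
    have "(\<integral>t. \<integral>y. joint_density D z x1 x2 t y * (a0 + a1 * t^2 + a2 * (t * y) + a3 * y^2) \<partial>lborel \<partial>lborel) =
        (std_normal_density z * normal_density (C1 * z) S1 x1 * normal_density (C2 * z) S2 x2) *
        ((a0 + a3 * Cyz^2 * z^2 + a3 * Sy^2) + ((a2 * Cyz + 2 * a3 * Cyz * Cyt) * z) * (Ct * z) + Kt * ((Ct * z)^2 + St^2))"
      unfolding y by (subst integral_mult_right_zero, subst normal_density_times_quadratic(2)[OF s(3),
          where A = "a0 + a3 * Cyz^2 * z^2 + a3 * Sy^2" and B = "(a2 * Cyz + 2 * a3 * Cyz * Cyt) * z" and C = Kt]) auto
    then show ?thesis by (simp add: V_def power2_eq_square algebra_simps)
  qed
  have x2: "(\<integral>x2. \<integral>t. \<integral>y. joint_density D z x1 x2 t y * (a0 + a1 * t^2 + a2 * (t * y) + a3 * y^2)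
      \<partial>lborel \<partial>lborel \<partial>lborel) = (std_normal_density z * V) * normal_density (C1 * z) S1 x1" for x1
    unfolding t using s(2) by (simp add: mult_ac)
  have "(\<integral>x1. \<integral>x2. \<integral>t. \<integral>y. joint_density D z x1 x2 t y * (a0 + a1 * t^2 + a2 * (t * y) + a3 * y^2)
      \<partial>lborel \<partial>lborel \<partial>lborel \<partial>lborel) = std_normal_density z * V"
    unfolding x2 using s(1) by simp
  then show ?thesis by (simp add: V_def Kt_def defs)
qed

lemma p_obs_quadratic_ty:
  assumes "valid_dgp D"
  shows "integrable lborel4 (\<lambda>(x1, x2, t, y). p_obs D x1 x2 t y * (a0 + a1 * t^2 + a2 * (t * y) + a3 * y^2))"
    and "(\<integral>x1. \<integral>x2. \<integral>t. \<integral>y. p_obs D x1 x2 t y * (a0 + a1 * t^2 + a2 * (t * y) + a3 * y^2)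
        \<partial>lborel \<partial>lborel \<partial>lborel \<partial>lborel)
      = a0 + a1 * moment_tt D + a2 * moment_ty D + a3 * moment_yy D"
proof -
  let ?q = "\<lambda>t y. a0 + a1 * t^2 + a2 * (t * y) + a3 * y^2"
  have q_meas: "(\<lambda>(x1, x2, t, y). (\<lambda>x1 x2 t y. ?q t y) x1 x2 t y) \<in> borel_measurable lborel4"
    by measurable
  note Fubini = p_obs_mult_Fubini[OF assms q_meas abs_quadratic_ty_le_weight]
  show int: "integrable lborel4 (\<lambda>(x1, x2, t, y). p_obs D x1 x2 t y * ?q t y)"
    using Fubini(1) by simp
  define A C where "A = a0 + a3 * sig_y D^2 + (a1 + a2 * c_yt D + a3 * c_yt D^2) * sig_t D^2"
    and "C = a3 * c_yz D^2 + a2 * c_yz D * c_t D + 2 * a3 * c_yz D * c_yt D * c_t D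
      + (a1 + a2 * c_yt D + a3 * c_yt D^2) * c_t D^2"
  have "(\<integral>x1. \<integral>x2. \<integral>t. \<integral>y. p_obs D x1 x2 t y * ?q t y \<partial>lborel \<partial>lborel \<partial>lborel \<partial>lborel)
      = integral\<^sup>L lborel4 (\<lambda>(x1, x2, t, y). p_obs D x1 x2 t y * ?q t y)"
    using integral_lborel4_iterated[OF int] by simp
  also have "\<dots> = (\<integral>z. integral\<^sup>L lborel4 (\<lambda>(x1, x2, t, y). joint_density D z x1 x2 t y * ?q t y) \<partial>lborel)"
    using Fubini(2) by simp
  also have "\<dots> = (\<integral>z. std_normal_density z * (A + 0 * z + C * z^2) \<partial>lborel)"
  proof (rule integral_cong_AE)
    show "(\<lambda>z. integral\<^sup>L lborel4 (\<lambda>(x1, x2, t, y). joint_density D z x1 x2 t y * ?q t y)) \<in> borel_measurable lborel"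
      by (rule sigma_finite_measure.borel_measurable_lebesgue_integral[OF sigma_finite_lborel4])
         (unfold joint_density_def normal_density_def split_beta', measurable)
    show "AE z in lborel. integral\<^sup>L lborel4 (\<lambda>(x1, x2, t, y). joint_density D z x1 x2 t y * ?q t y)
        = std_normal_density z * (A + 0 * z + C * z^2)"
      using Fubini(3)
    proof eventually_elim
      case (elim z)
      then have "integrable lborel4 (\<lambda>(x1, x2, t, y). joint_density D z x1 x2 t y * ?q t y)" by simp
      from integral_lborel4_iterated[OF this]
        integral_joint_density_quadratic_ty_given_latent[OF assms, of z a0 a1 a2 a3]
      show ?case by (simp add: A_def C_def)
    qed
  qed (unfold normal_density_def, measurable)
  also have "\<dots> = A + 0 * 0 + C * (0^2 + 1^2)"
    by (rule normal_density_times_quadratic(2)) auto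
  also have "\<dots> = a0 + a1 * moment_tt D + a2 * moment_ty D + a3 * moment_yy D"
    by (simp add: A_def C_def moment_tt_def moment_ty_def moment_yy_def power2_eq_square algebra_simps)
  finally show "(\<integral>x1. \<integral>x2. \<integral>t. \<integral>y. p_obs D x1 x2 t y * ?q t y \<partial>lborel \<partial>lborel \<partial>lborel \<partial>lborel)
      = a0 + a1 * moment_tt D + a2 * moment_ty D + a3 * moment_yy D" .
qed

lemma joint_density_factorization:
  assumes "valid_dgp D"
  obtains \<mu> v where "0 < v" and "\<And>z x1 x2. joint_density D z x1 x2 t y =
      normal_density 0 (sqrt (moment_tt D)) t
      * normal_density (moment_ty D / moment_tt D * t) (sqrt (residual_var_y D)) y
      * (normal_density \<mu> v z * normal_density (c_1 D * z) (sig_1 D) x1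
          * normal_density (c_2 D * z) (sig_2 D) x2)"
proof -
  have st: "0 < sig_t D" and sy: "0 < sig_y D" using assms unfolding valid_dgp_def by auto
  have S: "0 < moment_tt D" using moment_tt_pos[OF assms] .
  define mA vA where "mA = c_t D * t / moment_tt D" and "vA = sqrt (sig_t D^2 / moment_tt D)"
  have vA: "0 < vA" unfolding vA_def using S st by simp
  have A: "std_normal_density z * normal_density (c_t D * z) (sig_t D) t
      = normal_density 0 (sqrt (moment_tt D)) t * normal_density mA vA z" for z
    using normal_density_conjugate[OF zero_less_one st, where m = 0 and z = z and \<alpha> = "c_t D" and \<beta> = 0 and u = t]
    by (simp add: mA_def vA_def moment_tt_def)
  obtain mB vB where vB: "0 < vB" and B: "\<And>z. normal_density mA vA z * normal_density (c_yz D * z + c_yt D * t) (sig_y D) y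
      = normal_density (c_yz D * mA + c_yt D * t) (sqrt (c_yz D^2 * vA^2 + sig_y D^2)) y * normal_density mB vB z"
    using normal_density_conjugateE[OF vA sy] by metis
  have mean: "c_yz D * mA + c_yt D * t = moment_ty D / moment_tt D * t"
    unfolding mA_def moment_ty_def using S by (simp add: field_simps)
  have var: "c_yz D^2 * vA^2 + sig_y D^2 = residual_var_y D"
    unfolding vA_def residual_var_y_eq[OF assms] using S by simp
  show ?thesis
  proof (rule that[OF vB])
    fix z x1 x2
    have "joint_density D z x1 x2 t y = (std_normal_density z * normal_density (c_t D * z) (sig_t D) t)
        * normal_density (c_yz D * z + c_yt D * t) (sig_y D) y
        * (normal_density (c_1 D * z) (sig_1 D) x1 * normal_density (c_2 D * z) (sig_2 D) x2)"
      unfolding joint_density_def by (simp add: ac_simps)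
    also have "\<dots> = normal_density 0 (sqrt (moment_tt D)) t
        * (normal_density mA vA z * normal_density (c_yz D * z + c_yt D * t) (sig_y D) y)
        * (normal_density (c_1 D * z) (sig_1 D) x1 * normal_density (c_2 D * z) (sig_2 D) x2)"
      unfolding A by (simp add: ac_simps)
    also have "\<dots> = normal_density 0 (sqrt (moment_tt D)) t
        * normal_density (moment_ty D / moment_tt D * t) (sqrt (residual_var_y D)) y
        * (normal_density mB vB z * normal_density (c_1 D * z) (sig_1 D) x1
          * normal_density (c_2 D * z) (sig_2 D) x2)"
      unfolding B mean var by (simp add: ac_simps)
    finally show "joint_density D z x1 x2 t y = normal_density 0 (sqrt (moment_tt D)) t
        * normal_density (moment_ty D / moment_tt D * t) (sqrt (residual_var_y D)) y
        * (normal_density mB vB z * normal_density (c_1 D * z) (sig_1 D) x1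
          * normal_density (c_2 D * z) (sig_2 D) x2)" .
  qed
qed

lemma integral_posterior_proxies:
  assumes "0 < v" and "0 < s1" and "0 < s2"
  shows "(\<integral>x1. \<integral>x2. \<integral>z. normal_density \<mu> v z * normal_density (a1 * z) s1 x1
      * normal_density (a2 * z) s2 x2 \<partial>lborel \<partial>lborel \<partial>lborel) = 1"
proof -
  have inner: "(\<integral>x2. \<integral>z. normal_density \<mu> v z * normal_density (a1 * z) s1 x1
      * normal_density (a2 * z) s2 x2 \<partial>lborel \<partial>lborel) = normal_density (a1 * \<mu>) (sqrt (a1^2 * v^2 + s1^2)) x1"
    for x1
  proof -
    let ?c = "normal_density (a1 * \<mu>) (sqrt (a1^2 * v^2 + s1^2)) x1"
    obtain m' v' where v': "0 < v'" and eq: "\<And>z. normal_density \<mu> v z * normal_density (a1 * z + 0) s1 x1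
        = normal_density (a1 * \<mu> + 0) (sqrt (a1^2 * v^2 + s1^2)) x1 * normal_density m' v' z"
      using normal_density_conjugateE[OF assms(1,2)] by metis
    have eq': "normal_density \<mu> v z * normal_density (a1 * z) s1 x1 = ?c * normal_density m' v' z" for z
      using eq[of z] by simp
    have "(\<integral>z. normal_density \<mu> v z * normal_density (a1 * z) s1 x1 * normal_density (a2 * z) s2 x2 \<partial>lborel)
        = ?c * normal_density (a2 * m' + 0) (sqrt (a2^2 * v'^2 + s2^2)) x2" for x2
    proof -
      have "(\<integral>z. normal_density \<mu> v z * normal_density (a1 * z) s1 x1 * normal_density (a2 * z) s2 x2 \<partial>lborel)
          = (\<integral>z. ?c * (normal_density (a2 * z + 0) s2 x2 * normal_density m' v' z) \<partial>lborel)"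
        by (intro Bochner_Integration.integral_cong refl) (simp only: eq', simp add: ac_simps)
      then show ?thesis using integral_normal_density_marginal[OF v' assms(3), of a2 0 x2 m'] by simp
    qed
    moreover have "0 < sqrt (a2^2 * v'^2 + s2^2)" using assms(3) by (simp add: add_nonneg_pos)
    ultimately show ?thesis by simp
  qed
  have "0 < sqrt (a1^2 * v^2 + s1^2)" using assms(2) by (simp add: add_nonneg_pos)
  then show ?thesis unfolding inner by simp
qed

lemma p_ty_closed_form:
  assumes "valid_dgp D"
  shows "p_ty D t y = normal_density 0 (sqrt (moment_tt D)) t
    * normal_density (moment_ty D / moment_tt D * t) (sqrt (residual_var_y D)) y"
proof -
  obtain \<mu> v where v: "0 < v" and factor: "\<And>z x1 x2. joint_density D z x1 x2 t y =
      normal_density 0 (sqrt (moment_tt D)) t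
      * normal_density (moment_ty D / moment_tt D * t) (sqrt (residual_var_y D)) y
      * (normal_density \<mu> v z * normal_density (c_1 D * z) (sig_1 D) x1
          * normal_density (c_2 D * z) (sig_2 D) x2)"
    using joint_density_factorization[OF assms] by metis
  have "0 < sig_1 D" "0 < sig_2 D" using assms unfolding valid_dgp_def by auto
  with v show ?thesis
    unfolding p_ty_def p_obs_eq_integral_joint_density factor by (simp add: integral_posterior_proxies)
qed

lemma p_cond_closed_form:
  assumes "valid_dgp D"
  shows "p_cond D t y = normal_density (moment_ty D / moment_tt D * t) (sqrt (residual_var_y D)) y"
proof -
  have R: "0 < sqrt (residual_var_y D)" using residual_var_y_pos[OF assms] by simp
  have S: "0 < sqrt (moment_tt D)" using moment_tt_pos[OF assms] by simp
  have "p_t D t = normal_density 0 (sqrt (moment_tt D)) t"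
    unfolding p_t_def p_ty_closed_form[OF assms] using R by simp
  moreover have "0 < normal_density 0 (sqrt (moment_tt D)) t" by (rule normal_density_pos[OF S])
  ultimately show ?thesis unfolding p_cond_def p_ty_closed_form[OF assms] by simp
qed

subsection \<open>The linear CEVAE\<close>

lemma p_do_closed_form:
  assumes "valid_cevae P"
  shows "p_do P t y = normal_density (g_yt P * t) (sqrt (g_yz P^2 + s_y P^2)) y"
  using integral_normal_density_marginal[OF zero_less_one, where \<sigma> = "s_y P" and \<alpha> = "g_yz P"
      and \<beta> = "g_yt P * t" and u = y and m = 0] assms
  unfolding p_do_def dec_y_def valid_cevae_def by simp

abbreviation enc_mean :: "cevae \<Rightarrow> real \<Rightarrow> real \<Rightarrow> real \<Rightarrow> real \<Rightarrow> real" where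
  "enc_mean P x1 x2 t y \<equiv> a_1 P * x1 + a_2 P * x2 + a_t P * t + a_y P * y"

lemma integral_enc_log_decoder:
  assumes "valid_cevae P"
  shows "(\<integral>z. enc P x1 x2 t y z * (ln (dec_t P z t) + ln (dec_y P z t y)) \<partial>lborel) =
    - ln (sqrt (2 * pi * s_t P^2)) - ln (sqrt (2 * pi * s_y P^2))
    - ((t - g_t P * enc_mean P x1 x2 t y)^2 + g_t P^2 * s_q P^2) / (2 * s_t P^2)
    - ((y - g_yt P * t - g_yz P * enc_mean P x1 x2 t y)^2 + g_yz P^2 * s_q P^2) / (2 * s_y P^2)"
proof -
  define m where "m = enc_mean P x1 x2 t y"
  define St Sy Sq g h b where defs: "St = s_t P" "Sy = s_y P" "Sq = s_q P" "g = g_t P" "h = g_yz P" "b = g_yt P"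
  have St: "0 < St" and Sy: "0 < Sy" and Sq: "0 < Sq" using assms unfolding valid_cevae_def defs by auto
  define Lt Ly where "Lt = ln (sqrt (2 * pi * St^2))" and "Ly = ln (sqrt (2 * pi * Sy^2))"
  define A B C where "A = - Lt - Ly - t^2 / (2 * St^2) - (y - b * t)^2 / (2 * Sy^2)"
    and "B = g * t / St^2 + h * (y - b * t) / Sy^2" and "C = - (g^2) / (2 * St^2) - h^2 / (2 * Sy^2)"
  have "(\<integral>z. enc P x1 x2 t y z * (ln (dec_t P z t) + ln (dec_y P z t y)) \<partial>lborel)
      = (\<integral>z. normal_density m Sq z * (A + B * z + C * z^2) \<partial>lborel)"
  proof (intro Bochner_Integration.integral_cong refl)
    fix z
    have "ln (dec_t P z t) + ln (dec_y P z t y)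
        = - Lt - (t - g * z)^2 / (2 * St^2) - Ly - (y - (h * z + b * t))^2 / (2 * Sy^2)"
      unfolding dec_t_def dec_y_def using St Sy by (simp add: ln_normal_density defs Lt_def Ly_def)
    also have "\<dots> = A + B * z + C * z^2"
      unfolding A_def B_def C_def using St Sy by (simp add: field_simps) algebra
    finally show "enc P x1 x2 t y z * (ln (dec_t P z t) + ln (dec_y P z t y))
        = normal_density m Sq z * (A + B * z + C * z^2)"
      unfolding enc_def m_def defs by simp
  qed
  also have "\<dots> = A + B * m + C * (m^2 + Sq^2)"
    by (rule normal_density_times_quadratic(2)[OF Sq]) simp
  also have "\<dots> = - Lt - Ly - ((t - g * m)^2 + g^2 * Sq^2) / (2 * St^2)
      - ((y - b * t - h * m)^2 + h^2 * Sq^2) / (2 * Sy^2)"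
    unfolding A_def B_def C_def using St Sy by (simp add: field_simps) algebra
  finally show ?thesis by (simp add: m_def defs Lt_def Ly_def)
qed

lemma KL_enc_eq_gauss_KL:
  assumes "valid_cevae P"
  shows "KL_enc P x1 x2 t y = gauss_KL (enc_mean P x1 x2 t y) (s_q P^2) 0 1"
proof -
  define m Sq where "m = enc_mean P x1 x2 t y" and "Sq = s_q P"
  have Sq: "0 < Sq" using assms unfolding valid_cevae_def Sq_def by simp
  define A B C where "A = - ln (Sq^2) / 2 - m^2 / (2 * Sq^2)" and "B = m / Sq^2" and "C = 1/2 - 1 / (2 * Sq^2)"
  have "KL_enc P x1 x2 t y = (\<integral>z. normal_density m Sq z * (A + B * z + C * z^2) \<partial>lborel)"
    unfolding KL_enc_def
  proof (intro Bochner_Integration.integral_cong refl)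
    fix z
    have "ln (enc P x1 x2 t y z / std_normal_density z) = ln (normal_density m Sq z) - ln (std_normal_density z)"
      unfolding enc_def m_def Sq_def using Sq[unfolded Sq_def]
      by (intro ln_divide_pos normal_density_pos) simp_all
    also have "\<dots> = (- ln (sqrt (2 * pi * Sq^2)) - (z - m)^2 / (2 * Sq^2)) - (- ln (sqrt (2 * pi * 1^2)) - (z - 0)^2 / (2 * 1^2))"
      using Sq by (simp add: ln_normal_density)
    also have "\<dots> = A + B * z + C * z^2"
      unfolding A_def B_def C_def using Sq by (simp add: ln_sqrt ln_mult field_simps) algebra
    finally show "enc P x1 x2 t y z * ln (enc P x1 x2 t y z / std_normal_density z)
        = normal_density m Sq z * (A + B * z + C * z^2)"
      unfolding enc_def m_def Sq_def by simp
  qed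
  also have "\<dots> = A + B * m + C * (m^2 + Sq^2)"
    by (rule normal_density_times_quadratic(2)[OF Sq]) simp
  also have "\<dots> = gauss_KL m (Sq^2) 0 1"
    unfolding A_def B_def C_def gauss_KL_def using Sq by (simp add: ln_div field_simps power2_eq_square)
  finally show ?thesis by (simp add: m_def Sq_def)
qed

definition elbo_closed_form :: "cevae \<Rightarrow> real \<Rightarrow> real \<Rightarrow> real \<Rightarrow> real" where
  "elbo_closed_form P m t y = - ln (sqrt (2 * pi * s_t P^2)) - ln (sqrt (2 * pi * s_y P^2))
     - ((t - g_t P * m)^2 + g_t P^2 * s_q P^2) / (2 * s_t P^2)
     - ((y - g_yt P * t - g_yz P * m)^2 + g_yz P^2 * s_q P^2) / (2 * s_y P^2)
     - gauss_KL m (s_q P^2) 0 1"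

lemma elbo0_eq_elbo_closed_form:
  "valid_cevae P \<Longrightarrow> elbo0 P x1 x2 t y = elbo_closed_form P (enc_mean P x1 x2 t y) t y"
  unfolding elbo0_def elbo_closed_form_def by (simp add: integral_enc_log_decoder KL_enc_eq_gauss_KL)

text \<open>The decoder's marginal model of (t, y), p_theta(t) p_theta(y|t), and its posterior p_theta(z|t,y).\<close>
definition model_var_t :: "cevae \<Rightarrow> real" where
  "model_var_t P = g_t P^2 + s_t P^2"

definition model_slope :: "cevae \<Rightarrow> real" where
  "model_slope P = g_yt P + g_yz P * g_t P / model_var_t P"

definition model_residual_var :: "cevae \<Rightarrow> real" where
  "model_residual_var P = s_y P^2 + g_yz P^2 * s_t P^2 / model_var_t P"

definition model_log_density :: "cevae \<Rightarrow> real \<Rightarrow> real \<Rightarrow> real" where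
  "model_log_density P t y = ln (normal_density 0 (sqrt (model_var_t P)) t)
     + ln (normal_density (model_slope P * t) (sqrt (model_residual_var P)) y)"

definition posterior_var :: "cevae \<Rightarrow> real" where
  "posterior_var P = s_t P^2 * s_y P^2 / (s_t P^2 * s_y P^2 + g_t P^2 * s_y P^2 + g_yz P^2 * s_t P^2)"

definition posterior_mean :: "cevae \<Rightarrow> real \<Rightarrow> real \<Rightarrow> real" where
  "posterior_mean P t y = (g_t P * s_y P^2 * t + g_yz P * s_t P^2 * (y - g_yt P * t))
     / (s_t P^2 * s_y P^2 + g_t P^2 * s_y P^2 + g_yz P^2 * s_t P^2)"

lemma model_var_t_pos: "valid_cevae P \<Longrightarrow> 0 < model_var_t P"
  unfolding model_var_t_def valid_cevae_def by (simp add: add_nonneg_pos)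

lemma model_residual_var_pos: "valid_cevae P \<Longrightarrow> 0 < model_residual_var P"
  using model_var_t_pos[of P] unfolding model_residual_var_def valid_cevae_def by (simp add: add_pos_nonneg)

lemma posterior_var_pos: "valid_cevae P \<Longrightarrow> 0 < posterior_var P"
  unfolding posterior_var_def valid_cevae_def by (simp add: add_pos_nonneg)

lemma model_log_density_eq:
  assumes "valid_cevae P"
  shows "model_log_density P t y = - ln (sqrt (2 * pi * model_var_t P)) - ln (sqrt (2 * pi * model_residual_var P))
    - t^2 / (2 * model_var_t P) - (y - model_slope P * t)^2 / (2 * model_residual_var P)"
  using model_var_t_pos[OF assms] model_residual_var_pos[OF assms]
  unfolding model_log_density_def by (simp add: ln_normal_density)

lemma square_completion:
  fixes P Q g h \<beta> S m t y :: real
  assumes P: "0 < P" and Q: "0 < Q"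
  defines "vt \<equiv> g^2 + P" and "DD \<equiv> P * Q + g^2 * Q + h^2 * P"
  shows "1/2 - S/2 - g^2 * S / (2 * P) - h^2 * S / (2 * Q) - (t - g * m)^2 / (2 * P)
      - (y - \<beta> * t - h * m)^2 / (2 * Q) - m^2 / 2
    = - (t^2) / (2 * vt) - (y - (\<beta> + h * g / vt) * t)^2 / (2 * (Q + h^2 * P / vt)) - S / (2 * (P * Q / DD))
      - (m - (g * Q * t + h * P * (y - \<beta> * t)) / DD)^2 / (2 * (P * Q / DD)) + 1/2"
proof -
  have vt: "0 < vt" unfolding vt_def using P by (simp add: add_nonneg_pos)
  have DD: "0 < DD" unfolding DD_def using P Q by (simp add: add_pos_nonneg)
  have rr: "Q + h^2 * P / vt = DD / vt" using vt unfolding DD_def vt_def by (simp add: field_simps)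
  show ?thesis
    unfolding rr using P Q vt DD
    apply (simp add: field_simps)
    apply (simp only: DD_def vt_def)
    apply algebra
    done
qed

lemma elbo_closed_form_eq:
  assumes "valid_cevae P"
  shows "elbo_closed_form P m t y
    = model_log_density P t y - gauss_KL m (s_q P^2) (posterior_mean P t y) (posterior_var P)"
proof -
  define PP Q S g h b where defs: "PP = s_t P^2" "Q = s_y P^2" "S = s_q P^2" "g = g_t P" "h = g_yz P" "b = g_yt P"
  have PP: "0 < PP" and Q: "0 < Q" and S: "0 < S" using assms unfolding valid_cevae_def defs by auto
  define vt rr v where "vt = model_var_t P" and "rr = model_residual_var P" and "v = posterior_var P"
  have vt: "0 < vt" and rr: "0 < rr" and v: "0 < v" unfolding vt_def rr_def v_def
    using model_var_t_pos[OF assms] model_residual_var_pos[OF assms] posterior_var_pos[OF assms] by auto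
  define l where "l = ln (2 * pi)"
  define DD where "DD = PP * Q + g^2 * Q + h^2 * PP"
  have DD: "0 < DD" unfolding DD_def using PP Q by (simp add: add_pos_nonneg)
  have "vt * rr = DD"
    using vt unfolding vt_def rr_def model_residual_var_def DD_def
    by (simp add: field_simps) (simp add: model_var_t_def defs algebra_simps)
  then have "vt * rr * v = PP * Q"
    using DD unfolding v_def posterior_var_def DD_def defs by simp
  then have "ln (vt * rr * v) = ln (PP * Q)" by simp
  then have logs: "ln vt + ln rr + ln v = ln PP + ln Q"
    using vt rr v PP Q by (simp add: ln_mult)
  have lhs: "elbo_closed_form P m t y = - l / 2 - ln PP / 2 - l / 2 - ln Q / 2 + ln S / 2
      + (1/2 - S/2 - g^2 * S / (2 * PP) - h^2 * S / (2 * Q) - (t - g * m)^2 / (2 * PP)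
         - (y - b * t - h * m)^2 / (2 * Q) - m^2 / 2)"
    using ln_sqrt_two_pi[OF PP] ln_sqrt_two_pi[OF Q] S
    unfolding elbo_closed_form_def gauss_KL_def defs[symmetric] l_def
    by (simp add: add_divide_distrib diff_divide_distrib ln_div)
  have rhs: "model_log_density P t y - gauss_KL m S (posterior_mean P t y) v
      = - l / 2 - ln vt / 2 - l / 2 - ln rr / 2 - ln v / 2 + ln S / 2
      + (- (t^2) / (2 * vt) - (y - model_slope P * t)^2 / (2 * rr) - S / (2 * v)
         - (m - posterior_mean P t y)^2 / (2 * v) + 1/2)"
    using ln_sqrt_two_pi[OF vt] ln_sqrt_two_pi[OF rr] S v
    unfolding model_log_density_eq[OF assms] gauss_KL_def vt_def[symmetric] rr_def[symmetric] l_def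
    by (simp add: add_divide_distrib diff_divide_distrib ln_div)
  have rational: "1/2 - S/2 - g^2 * S / (2 * PP) - h^2 * S / (2 * Q) - (t - g * m)^2 / (2 * PP)
      - (y - b * t - h * m)^2 / (2 * Q) - m^2 / 2
    = - (t^2) / (2 * vt) - (y - model_slope P * t)^2 / (2 * rr) - S / (2 * v)
      - (m - posterior_mean P t y)^2 / (2 * v) + 1/2"
    using square_completion[OF PP Q, where g = g and h = h and \<beta> = b and S = S and m = m and t = t and y = y]
    unfolding vt_def rr_def v_def model_var_t_def model_residual_var_def model_slope_def
      posterior_var_def posterior_mean_def defs
    by (simp add: ac_simps)
  show ?thesis using lhs rhs logs rational unfolding defs(3) v_def by linarith
qed

lemma elbo_closed_form_le_model_log_density:
  assumes "valid_cevae P"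
  shows "elbo_closed_form P m t y \<le> model_log_density P t y"
  using gauss_KL_nonneg[of "s_q P^2" "posterior_var P"] posterior_var_pos[OF assms] assms
  unfolding elbo_closed_form_eq[OF assms] valid_cevae_def by simp

lemma linear_form_square_le_weight:
  "(l1 * x1 + l2 * x2 + l3 * t + l4 * y)^2 \<le> 4 * (l1^2 + l2^2 + l3^2 + l4^2) * quadratic_weight x1 x2 t y"
proof -
  define L where "L = l1^2 + l2^2 + l3^2 + l4^2"
  have sq4: "(a + b + c + d)^2 \<le> 4 * (a^2 + b^2 + c^2 + d^2)" for a b c d :: real
  proof -
    have "4 * (a^2 + b^2 + c^2 + d^2) - (a + b + c + d)^2
        = (a - b)^2 + (a - c)^2 + (a - d)^2 + (b - c)^2 + (b - d)^2 + (c - d)^2"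
      by (simp add: power2_eq_square algebra_simps)
    moreover have "0 \<le> (a - b)^2 + (a - c)^2 + (a - d)^2 + (b - c)^2 + (b - d)^2 + (c - d)^2" by simp
    ultimately show ?thesis by linarith
  qed
  have "(l1 * x1 + l2 * x2 + l3 * t + l4 * y)^2 \<le> 4 * (l1^2 * x1^2 + l2^2 * x2^2 + l3^2 * t^2 + l4^2 * y^2)"
    using sq4[of "l1 * x1" "l2 * x2" "l3 * t" "l4 * y"] by (simp add: power_mult_distrib)
  also have "\<dots> \<le> 4 * (L * x1^2 + L * x2^2 + L * t^2 + L * y^2)"
    unfolding L_def by (intro mult_left_mono add_mono mult_right_mono) auto
  also have "\<dots> \<le> 4 * L * quadratic_weight x1 x2 t y"
    unfolding quadratic_weight_def L_def by (simp add: algebra_simps)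
  finally show ?thesis unfolding L_def .
qed

lemma elbo_closed_form_eq_const_minus_squares:
  obtains c where "\<And>m t y. elbo_closed_form P m t y = c - (t - g_t P * m)^2 / (2 * s_t P^2)
    - (y - g_yt P * t - g_yz P * m)^2 / (2 * s_y P^2) - m^2 / 2"
proof (rule that)
  show "elbo_closed_form P m t y = (- ln (sqrt (2 * pi * s_t P^2)) - ln (sqrt (2 * pi * s_y P^2))
      - g_t P^2 * s_q P^2 / (2 * s_t P^2) - g_yz P^2 * s_q P^2 / (2 * s_y P^2)
      - (ln (1 / s_q P^2) + s_q P^2 - 1) / 2)
    - (t - g_t P * m)^2 / (2 * s_t P^2) - (y - g_yt P * t - g_yz P * m)^2 / (2 * s_y P^2) - m^2 / 2"
    for m t y
    unfolding elbo_closed_form_def gauss_KL_def by (simp add: add_divide_distrib diff_divide_distrib)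
qed

lemma elbo_closed_form_quadratic_bound:
  assumes "valid_cevae P"
  obtains K where "\<And>x1 x2 t y. \<bar>elbo_closed_form P (enc_mean P x1 x2 t y) t y\<bar> \<le> K * quadratic_weight x1 x2 t y"
proof -
  obtain c0 where elbo: "\<And>m t y. elbo_closed_form P m t y = c0 - (t - g_t P * m)^2 / (2 * s_t P^2)
      - (y - g_yt P * t - g_yz P * m)^2 / (2 * s_y P^2) - m^2 / 2"
    using elbo_closed_form_eq_const_minus_squares[of P] by metis
  define g h b a1 a2 aT ay where defs: "g = g_t P" "h = g_yz P" "b = g_yt P" "a1 = a_1 P" "a2 = a_2 P"
    "aT = a_t P" "ay = a_y P"
  define PP Q where "PP = s_t P^2" and "Q = s_y P^2"
  have PP: "0 < PP" and Q: "0 < Q" using assms unfolding valid_cevae_def PP_def Q_def by auto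
  define L1 L2 L3 where "L1 = (- g * a1)^2 + (- g * a2)^2 + (1 - g * aT)^2 + (- g * ay)^2"
    and "L2 = (- h * a1)^2 + (- h * a2)^2 + (- b - h * aT)^2 + (1 - h * ay)^2"
    and "L3 = a1^2 + a2^2 + aT^2 + ay^2"
  show ?thesis
  proof (rule that)
    fix x1 x2 t y
    define m where "m = a1 * x1 + a2 * x2 + aT * t + ay * y"
    let ?w = "quadratic_weight x1 x2 t y"
    have "t - g * m = (- g * a1) * x1 + (- g * a2) * x2 + (1 - g * aT) * t + (- g * ay) * y"
      unfolding m_def by (simp add: algebra_simps)
    then have "(t - g * m)^2 \<le> 4 * L1 * ?w"
      unfolding L1_def using linear_form_square_le_weight by metis
    then have q1: "(t - g * m)^2 / (2 * PP) \<le> 4 * L1 / (2 * PP) * ?w"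
      using PP by (simp add: field_simps)
    have "y - b * t - h * m = (- h * a1) * x1 + (- h * a2) * x2 + (- b - h * aT) * t + (1 - h * ay) * y"
      unfolding m_def by (simp add: algebra_simps)
    then have "(y - b * t - h * m)^2 \<le> 4 * L2 * ?w"
      unfolding L2_def using linear_form_square_le_weight by metis
    then have q2: "(y - b * t - h * m)^2 / (2 * Q) \<le> 4 * L2 / (2 * Q) * ?w"
      using Q by (simp add: field_simps)
    have q3: "m^2 / 2 \<le> 4 * L3 / 2 * ?w"
      using linear_form_square_le_weight[of a1 x1 a2 x2 aT t ay y] unfolding m_def L3_def by simp
    have c: "\<bar>c0\<bar> \<le> \<bar>c0\<bar> * ?w" using one_le_quadratic_weight[of x1 x2 t y] by (simp add: mult_le_cancel_left1)
    have "0 \<le> (t - g * m)^2 / (2 * PP)" "0 \<le> (y - b * t - h * m)^2 / (2 * Q)" "0 \<le> m^2 / 2"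
      using PP Q by simp_all
    then have "\<bar>elbo_closed_form P m t y\<bar> \<le> (\<bar>c0\<bar> + 4 * L1 / (2 * PP) + 4 * L2 / (2 * Q) + 4 * L3 / 2) * ?w"
      unfolding elbo PP_def[symmetric] Q_def[symmetric] defs[symmetric] abs_le_iff distrib_right
      using q1 q2 q3 c by (intro conjI) linarith+
    then show "\<bar>elbo_closed_form P (enc_mean P x1 x2 t y) t y\<bar>
        \<le> (\<bar>c0\<bar> + 4 * L1 / (2 * PP) + 4 * L2 / (2 * Q) + 4 * L3 / 2) * ?w"
      unfolding m_def defs .
  qed
qed

subsection \<open>Maximisers of the objective\<close>

text \<open>E_p ln p_theta(t, y) and E_p ln p(t, y), in closed form.\<close>
definition neg_cross_entropy :: "dgp \<Rightarrow> cevae \<Rightarrow> real" where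
  "neg_cross_entropy D P = - ln (sqrt (2 * pi * model_var_t P)) - ln (sqrt (2 * pi * model_residual_var P))
     - moment_tt D / (2 * model_var_t P)
     - (residual_var_y D + (model_slope P * moment_tt D - moment_ty D)^2 / moment_tt D)
       / (2 * model_residual_var P)"

definition neg_entropy :: "dgp \<Rightarrow> real" where
  "neg_entropy D = - ln (sqrt (2 * pi * moment_tt D)) - ln (sqrt (2 * pi * residual_var_y D)) - 1"

lemma p_obs_model_log_density:
  assumes "valid_dgp D" and "valid_cevae P"
  shows "integrable lborel4 (\<lambda>(x1, x2, t, y). p_obs D x1 x2 t y * model_log_density P t y)"
    and "(\<integral>x1. \<integral>x2. \<integral>t. \<integral>y. p_obs D x1 x2 t y * model_log_density P t y \<partial>lborel \<partial>lborel \<partial>lborel \<partial>lborel)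
      = neg_cross_entropy D P"
proof -
  define a0 a1 a2 a3 where
    "a0 = - ln (sqrt (2 * pi * model_var_t P)) - ln (sqrt (2 * pi * model_residual_var P))"
    and "a1 = - 1 / (2 * model_var_t P) - model_slope P^2 / (2 * model_residual_var P)"
    and "a2 = model_slope P / model_residual_var P" and "a3 = - 1 / (2 * model_residual_var P)"
  have quadratic: "model_log_density P t y = a0 + a1 * t^2 + a2 * (t * y) + a3 * y^2" for t y
    using model_var_t_pos[OF assms(2)] model_residual_var_pos[OF assms(2)]
    unfolding model_log_density_eq[OF assms(2)] a0_def a1_def a2_def a3_def
    by (simp add: field_simps power2_eq_square)
  show "integrable lborel4 (\<lambda>(x1, x2, t, y). p_obs D x1 x2 t y * model_log_density P t y)"
    unfolding quadratic by (rule p_obs_quadratic_ty(1)[OF assms(1)])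
  have "a0 + a1 * moment_tt D + a2 * moment_ty D + a3 * moment_yy D = neg_cross_entropy D P"
    using moment_tt_pos[OF assms(1)] model_var_t_pos[OF assms(2)] model_residual_var_pos[OF assms(2)]
    unfolding neg_cross_entropy_def residual_var_y_def a0_def a1_def a2_def a3_def
    by (simp add: field_simps power2_eq_square)
  then show "(\<integral>x1. \<integral>x2. \<integral>t. \<integral>y. p_obs D x1 x2 t y * model_log_density P t y
      \<partial>lborel \<partial>lborel \<partial>lborel \<partial>lborel) = neg_cross_entropy D P"
    unfolding quadratic using p_obs_quadratic_ty(2)[OF assms(1)] by simp
qed

lemma L0_le_neg_cross_entropy:
  assumes "valid_dgp D" and "valid_cevae P"
  shows "L0 D P \<le> neg_cross_entropy D P"
proof -
  let ?elbo = "\<lambda>x1 x2 t y. elbo_closed_form P (enc_mean P x1 x2 t y) t y"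
  obtain K where bound: "\<And>x1 x2 t y. \<bar>?elbo x1 x2 t y\<bar> \<le> K * quadratic_weight x1 x2 t y"
    using elbo_closed_form_quadratic_bound[OF assms(2)] by blast
  have meas: "(\<lambda>(x1, x2, t, y). ?elbo x1 x2 t y) \<in> borel_measurable lborel4"
    unfolding elbo_closed_form_def gauss_KL_def by measurable
  have I1: "integrable lborel4 (\<lambda>(x1, x2, t, y). p_obs D x1 x2 t y * ?elbo x1 x2 t y)"
    by (rule p_obs_mult_Fubini(1)[OF assms(1) meas bound])
  note I2 = p_obs_model_log_density(1)[OF assms]
  have "L0 D P = (\<integral>x1. \<integral>x2. \<integral>t. \<integral>y. p_obs D x1 x2 t y * ?elbo x1 x2 t y
      \<partial>lborel \<partial>lborel \<partial>lborel \<partial>lborel)"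
    unfolding L0_def elbo0_eq_elbo_closed_form[OF assms(2)] ..
  also have "\<dots> = integral\<^sup>L lborel4 (\<lambda>(x1, x2, t, y). p_obs D x1 x2 t y * ?elbo x1 x2 t y)"
    using integral_lborel4_iterated[OF I1] by simp
  also have "\<dots> \<le> integral\<^sup>L lborel4 (\<lambda>(x1, x2, t, y). p_obs D x1 x2 t y * model_log_density P t y)"
    using I1 I2 by (rule integral_mono) (auto split: prod.splits
        intro!: mult_left_mono p_obs_nonneg elbo_closed_form_le_model_log_density[OF assms(2)])
  also have "\<dots> = neg_cross_entropy D P"
    using integral_lborel4_iterated[OF I2] p_obs_model_log_density(2)[OF assms] by simp
  finally show ?thesis .
qed

lemma neg_cross_entropy_le_neg_entropy:
  assumes "valid_dgp D" and "valid_cevae P"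
  shows "neg_cross_entropy D P \<le> neg_entropy D"
  unfolding neg_cross_entropy_def neg_entropy_def
  using moment_tt_pos[OF assms(1)] residual_var_y_pos[OF assms(1)]
    model_var_t_pos[OF assms(2)] model_residual_var_pos[OF assms(2)]
  by (intro gaussian_cross_entropy_le(1)) simp_all

lemma neg_entropy_le_neg_cross_entropy_imp_fit:
  assumes "valid_dgp D" and "valid_cevae P" and "neg_entropy D \<le> neg_cross_entropy D P"
  shows "model_var_t P = moment_tt D \<and> model_slope P = moment_ty D / moment_tt D
    \<and> model_residual_var P = residual_var_y D"
proof -
  note pos = moment_tt_pos[OF assms(1)] residual_var_y_pos[OF assms(1)]
    model_var_t_pos[OF assms(2)] model_residual_var_pos[OF assms(2)]
  have "model_var_t P = moment_tt D \<and> model_residual_var P = residual_var_y D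
      \<and> (model_slope P * moment_tt D - moment_ty D)^2 / moment_tt D = 0"
    using assms(3) pos unfolding neg_cross_entropy_def neg_entropy_def
    by (intro gaussian_cross_entropy_le(2)) simp_all
  then show ?thesis using pos by (simp add: field_simps)
qed

definition observational_fit :: "dgp \<Rightarrow> cevae" where
  "observational_fit D = \<lparr>g_t = 0, g_yz = 0, g_yt = moment_ty D / moment_tt D,
     s_t = sqrt (moment_tt D), s_y = sqrt (residual_var_y D), a_1 = 0, a_2 = 0, a_t = 0, a_y = 0, s_q = 1\<rparr>"

lemma observational_fit_valid: "valid_dgp D \<Longrightarrow> valid_cevae (observational_fit D)"
  using moment_tt_pos[of D] residual_var_y_pos[of D] unfolding valid_cevae_def observational_fit_def by simp

lemma L0_observational_fit:
  assumes "valid_dgp D"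
  shows "L0 D (observational_fit D) = neg_entropy D"
proof -
  let ?P = "observational_fit D"
  note V = observational_fit_valid[OF assms]
  have model: "model_var_t ?P = moment_tt D" "model_slope ?P = moment_ty D / moment_tt D"
      "model_residual_var ?P = residual_var_y D"
    using moment_tt_pos[OF assms] residual_var_y_pos[OF assms]
    unfolding model_var_t_def model_slope_def model_residual_var_def observational_fit_def by simp_all
  have posterior: "posterior_mean ?P t y = 0" "posterior_var ?P = 1" for t y
    using moment_tt_pos[OF assms] residual_var_y_pos[OF assms]
    unfolding posterior_mean_def posterior_var_def observational_fit_def by simp_all
  have "elbo0 ?P x1 x2 t y = model_log_density ?P t y" for x1 x2 t y
    unfolding elbo0_eq_elbo_closed_form[OF V] elbo_closed_form_eq[OF V] posterior
    by (simp add: observational_fit_def gauss_KL_def)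
  then have "L0 D ?P = neg_cross_entropy D ?P"
    unfolding L0_def using p_obs_model_log_density(2)[OF assms V] by simp
  also have "\<dots> = neg_entropy D"
    using moment_tt_pos[OF assms] residual_var_y_pos[OF assms]
    unfolding neg_cross_entropy_def neg_entropy_def model by simp
  finally show ?thesis .
qed

lemma observational_fit_is_global_max: "valid_dgp D \<Longrightarrow> is_global_max D (observational_fit D)"
  unfolding is_global_max_def
  using observational_fit_valid L0_observational_fit L0_le_neg_cross_entropy neg_cross_entropy_le_neg_entropy
  by (metis order.trans)

lemma global_max_fits_observational:
  assumes "valid_dgp D" and "is_global_max D P"
  shows "model_var_t P = moment_tt D \<and> model_slope P = moment_ty D / moment_tt D
    \<and> model_residual_var P = residual_var_y D"
proof -
  have V: "valid_cevae P" using assms(2) unfolding is_global_max_def by simp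
  have "neg_entropy D = L0 D (observational_fit D)" by (rule L0_observational_fit[OF assms(1), symmetric])
  also have "\<dots> \<le> L0 D P"
    using assms(2) observational_fit_valid[OF assms(1)] unfolding is_global_max_def by simp
  also have "\<dots> \<le> neg_cross_entropy D P" by (rule L0_le_neg_cross_entropy[OF assms(1) V])
  finally show ?thesis by (rule neg_entropy_le_neg_cross_entropy_imp_fit[OF assms(1) V])
qed

lemma p_do_eq_p_cond:
  assumes "valid_dgp D" and "valid_cevae P"
    and "model_slope P = moment_ty D / moment_tt D" and "model_residual_var P = residual_var_y D"
    and "g_yz P = 0 \<or> g_t P = 0"
  shows "p_do P t y = p_cond D t y"
proof -
  have "s_t P \<noteq> 0" using assms(2) unfolding valid_cevae_def by simp
  then have "model_slope P = g_yt P" and "model_residual_var P = g_yz P^2 + s_y P^2"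
    using assms(5) unfolding model_slope_def model_residual_var_def model_var_t_def by auto
  then show ?thesis
    unfolding p_do_closed_form[OF assms(2)] p_cond_closed_form[OF assms(1)] using assms(3,4) by simp
qed

theorem proposition3:
  fixes D :: dgp
  assumes "valid_dgp D"
  shows "(\<exists>P. is_global_max D P \<and> g_yz P = 0)
       \<and> (\<exists>P. is_global_max D P \<and> g_t P = 0)
       \<and> (\<forall>P. is_global_max D P \<and> (g_yz P = 0 \<or> g_t P = 0)
              \<longrightarrow> (\<forall>t y. p_do P t y = p_cond D t y))"
proof -
  have "is_global_max D (observational_fit D)"
    by (rule observational_fit_is_global_max[OF assms])
  moreover have "g_yz (observational_fit D) = 0" and "g_t (observational_fit D) = 0"
    unfolding observational_fit_def by simp_all
  moreover have "p_do P t y = p_cond D t y"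
    if "is_global_max D P" and "g_yz P = 0 \<or> g_t P = 0" for P t y
  proof -
    have "valid_cevae P" using that(1) unfolding is_global_max_def by simp
    with global_max_fits_observational[OF assms that(1)] that(2) show ?thesis
      using p_do_eq_p_cond[OF assms] by blast
  qed
  ultimately show ?thesis by blast
qed

end
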